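(* Assume (A1), (A2), (A4). Then $\hat J_1$ restricted to $W_{ad}^\rho\times\Xi$ is a Carathéodory function, and there exists an integrable random variable $h:\Xi\to[0,\infty)$ with $\hat J_1(u,\xi)\le h(\xi)$ for all $u\in W_{ad}^\rho$ and all $\xi\in\Xi$.
   Context: Standing setting. $U$ is a real separable Hilbert space (identified with its dual), $Y$, $Z$, $V$ are real separable Banach spaces. $\Xi$ is a complete separable metric space; $\xi$ is a $\Xi$-valued random element. Carathéodory means continuous in the first argument and measurable in the second. $\mathbb E$ denotes expectation w.r.t. the law of $\xi$. For proper convex lsc $\chi:U\to(-\infty,\infty]$, $\operatorname{prox}_\chi(v)=\arg\min_{w\in U}\chi(w)+\frac12\|v-w\|_U^2$; $\overline{A}^{\|\cdot\|_U}$ is the norm closure. (A1) $J_1:Y\times\Xi\to[0,\infty)$ is Carathéodory and $J_1(\cdot,\xi)$ is continuously differentiable for all $\xi$; $\alpha>0$; $\psi:U\to[0,\infty]$ is proper, convex, lower semicontinuous. (A2) $E:Y\times U\times\Xi\to Z$ is Carathéodory, $E(\cdot,\cdot,\xi)$ is continuously differentiable; for each $(u,\xi)$, $S(u,\xi)$ is the unique $y\in Y$ with $E(y,u,\xi)=0$; $E_y(S(u,\xi),u,\xi)$ has a bounded inverse. Definitions: $\hat J_1(u,\xi)=J_1(S(u,\xi),\xi)$, $\hat J(u,\xi)=\hat J_1(u,\xi)+\psi(u)+(\alpha/2)\|u\|_U^2$, $U_{ad}=\{u\in U:\psi(u)<\infty\}$. Fix $u_0\in U_{ad}$ with $\mathbb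 E[\hat J(u_0,\xi)]<\infty$ and $\rho\in(0,\infty)$; $V_{ad}^\rho(u_0)=\{u\in U_{ad}:(\alpha/2)\|u\|_U^2\le \mathbb E[\hat J(u_0,\xi)]+\rho\}$. (A4) $K:V\to U$ is linear and compact; $B\subset U$ is a bounded, convex, open set containing $V_{ad}^\rho(u_0)$; $M:U\times\Xi\to V$ is Carathéodory with $\nabla_u\hat J_1(u,\xi)=K[M(u,\xi)]$ for all $(u,\xi)$; there is an integrable $\zeta:\Xi\to[0,\infty)$ with $\|M(u,\xi)\|_V\le\zeta(\xi)$ for all $(u,\xi)\in B\times\Xi$. $W_{ad}^\rho=V_{ad}^\rho(u_0)\cap\overline{\{\operatorname{prox}_{\psi/\alpha}(-(1/\alpha)K[v]):v\in V,\ \|v\|_V\le\mathbb E[\zeta(\xi)]+\rho\}}^{\|\cdot\|_U}$. *)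

theory Defs
  imports "HOL-Analysis.Analysis" "HOL-Probability.Probability"
begin

definition convex_enn :: "('a::real_vector \<Rightarrow> ennreal) \<Rightarrow> bool" where
  "convex_enn f \<longleftrightarrow> (\<forall>x y. \<forall>t::real. 0 \<le> t \<and> t \<le> 1 \<longrightarrow>
      f ((1 - t) *\<^sub>R x + t *\<^sub>R y) \<le> ennreal (1 - t) * f x + ennreal t * f y)"

definition lsc_enn :: "('a::topological_space \<Rightarrow> ennreal) \<Rightarrow> bool" where
  "lsc_enn f \<longleftrightarrow> (\<forall>c. closed {x. f x \<le> c})"

definition proper_enn :: "('a \<Rightarrow> ennreal) \<Rightarrow> bool" where
  "proper_enn f \<longleftrightarrow> (\<exists>x. f x < \<infinity>)"

definition prox_enn :: "('a::real_inner \<Rightarrow> ennreal) \<Rightarrow> 'a \<Rightarrow> 'a" where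
  "prox_enn f v = (SOME w. \<forall>w'. f w + ennreal ((1/2) * (norm (v - w))\<^sup>2)
                                 \<le> f w' + ennreal ((1/2) * (norm (v - w'))\<^sup>2))"

definition compact_operator :: "('a::real_normed_vector \<Rightarrow> 'b::real_normed_vector) \<Rightarrow> bool" where
  "compact_operator K \<longleftrightarrow> linear K \<and> (\<forall>S. bounded S \<longrightarrow> compact (closure (K ` S)))"

end

theory Submission
  imports Defs
begin

text \<open>Continuity in \<open>u\<close> is immediate from differentiability. For the majorant, the mean value
  theorem on the bounded convex set \<open>B \<supseteq> W\<close> with gradient \<open>K[M(u, \<xi>)]\<close> of norm at most
  \<open>\<parallel>K\<parallel> \<zeta>(\<xi>)\<close> gives \<open>J\<^sub>1(S(u, \<xi>), \<xi>) \<le> J\<^sub>1(S(u\<^sub>0, \<xi>), \<xi>) + 2 R \<parallel>K\<parallel> \<zeta>(\<xi>)\<close>, and the first summand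
  is integrable because \<open>E[\<hat>J(u\<^sub>0, \<xi>)] < \<infinity>\<close>.

  The real work is measurability in \<open>\<xi>\<close>. The solution \<open>S(u, \<xi>)\<close> is the pointwise limit of the
  measurable maps choosing the first point \<open>d\<close> of a countable dense set that carries a
  certificate of radius \<open>r \<le> 1/(n+1)\<close>: a lower bound for \<open>E\<^sub>y\<close> at \<open>d\<close>, small variation of \<open>E\<^sub>y\<close>
  near \<open>d\<close> and a small residual \<open>E(d)\<close>, which by a contraction argument force
  \<open>dist d (S(u, \<xi>)) \<le> r\<close>. A certificate involves only countably many evaluations of \<open>E\<close> and
  \<open>E\<^sub>y\<close>, the latter measurable in \<open>\<xi>\<close> as a limit of difference quotients, and certificates exist
  because invertibility of \<open>E\<^sub>y\<close> at the solution survives small perturbations.\<close>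

lemma has_derivative_LIMSEQ_difference_quotient:
  fixes f :: "'a::real_normed_vector \<Rightarrow> 'b::real_normed_vector"
  assumes f': "(f has_derivative A) (at y)"
  shows "(\<lambda>n. real (Suc n) *\<^sub>R (f (y + inverse (real (Suc n)) *\<^sub>R h) - f y)) \<longlonglongrightarrow> A h"
proof (cases "h = 0")
  case True
  have "A 0 = 0"
    using f' has_derivative_bounded_linear linear_simps(3) bounded_linear.linear by blast
  then show ?thesis using True by simp
next
  case False
  have A: "bounded_linear A" using f' has_derivative_bounded_linear by blast
  from f' have remainder: "((\<lambda>k. norm (f (y + k) - f y - A k) / norm k) \<longlongrightarrow> 0) (at 0)"
    unfolding has_derivative_at by blast
  define k where "k n = inverse (real (Suc n)) *\<^sub>R h" for n
  have "k \<longlonglongrightarrow> 0" unfolding k_def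
    using tendsto_scaleR[OF LIMSEQ_inverse_real_of_nat tendsto_const, of h] by simp
  moreover have "k n \<noteq> 0" for n using False unfolding k_def by simp
  ultimately have "filterlim k (at 0) sequentially"
    by (simp add: filterlim_at eventually_sequentially)
  from filterlim_compose[OF remainder this]
  have remainder_k: "(\<lambda>n. norm (f (y + k n) - f y - A (k n)) / norm (k n)) \<longlonglongrightarrow> 0"
    by (simp add: o_def)
  have error_eq: "norm (real (Suc n) *\<^sub>R (f (y + k n) - f y) - A h)
      = norm h * (norm (f (y + k n) - f y - A (k n)) / norm (k n))" for n
  proof -
    define v where "v = f (y + k n) - f y - A (k n)"
    have "A (k n) = inverse (real (Suc n)) *\<^sub>R A h"
      unfolding k_def using A by (simp add: linear_scale[OF bounded_linear.linear])
    then have "A h = real (Suc n) *\<^sub>R A (k n)" by simp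
    then have error: "real (Suc n) *\<^sub>R (f (y + k n) - f y) - A h = real (Suc n) *\<^sub>R v"
      unfolding v_def by (simp only: scaleR_diff_right)
    have "norm (k n) = norm h / real (Suc n)"
      unfolding k_def by (simp add: divide_inverse mult.commute)
    moreover have "norm h * (norm v / (norm h / real (Suc n))) = real (Suc n) * norm v"
      using False by simp
    ultimately show ?thesis unfolding error v_def[symmetric] by simp
  qed
  have "(\<lambda>n. norm (real (Suc n) *\<^sub>R (f (y + k n) - f y) - A h)) \<longlonglongrightarrow> 0"
    unfolding error_eq using tendsto_mult_right_zero[OF remainder_k] by simp
  then have "(\<lambda>n. real (Suc n) *\<^sub>R (f (y + k n) - f y) - A h) \<longlonglongrightarrow> 0"
    by (rule tendsto_norm_zero_cancel)
  then show ?thesis unfolding k_def by (rule LIM_zero_cancel)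
qed

lemma borel_measurable_has_derivative_apply:
  fixes f :: "'x \<Rightarrow> 'a::real_normed_vector \<Rightarrow> 'b::{real_normed_vector,second_countable_topology}"
  assumes f': "\<And>\<xi>. (f \<xi> has_derivative blinfun_apply (A \<xi>)) (at y)"
    and f_meas: "\<And>z. (\<lambda>\<xi>. f \<xi> z) \<in> borel_measurable M"
  shows "(\<lambda>\<xi>. A \<xi> h) \<in> borel_measurable M"
proof (rule borel_measurable_LIMSEQ_metric)
  fix n
  show "(\<lambda>\<xi>. real (Suc n) *\<^sub>R (f \<xi> (y + inverse (real (Suc n)) *\<^sub>R h) - f \<xi> y))
    \<in> borel_measurable M"
    using f_meas by measurable
qed (rule has_derivative_LIMSEQ_difference_quotient[OF f'])

lemma dense_sequence_exists:
  "\<exists>d :: nat \<Rightarrow> 'a::{metric_space,second_countable_topology}. closure (range d) = UNIV"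
proof -
  obtain D :: "'a set"
    where "countable D" and D: "\<And>X. open X \<Longrightarrow> X \<noteq> {} \<Longrightarrow> \<exists>d\<in>D. d \<in> X"
    using countable_dense_exists by blast
  moreover have "D \<noteq> {}" using D[of UNIV] by auto
  moreover have "x \<in> closure D" for x
    unfolding closure_approachable
  proof (intro allI impI)
    fix e :: real assume "e > 0"
    then obtain d where "d \<in> D" "d \<in> ball x e" using D[of "ball x e"] by auto
    then show "\<exists>y\<in>D. dist y x < e" by (auto simp: dist_commute)
  qed
  ultimately show ?thesis by (intro exI[of _ "from_nat_into D"]) auto
qed

lemma bounded_linear_if_compact_operator:
  assumes "compact_operator K"
  shows "bounded_linear K"
proof -
  have K: "linear K" using assms unfolding compact_operator_def by blast
  have "bounded (closure (K ` cball 0 1))"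
    using assms unfolding compact_operator_def by (intro compact_imp_bounded) auto
  then have "bounded (K ` cball 0 1)" using bounded_subset closure_subset by blast
  then obtain C where "\<forall>x\<in>cball 0 1. norm (K x) \<le> C"
    unfolding bounded_iff by blast
  then have C: "\<And>x. norm x \<le> 1 \<Longrightarrow> norm (K x) \<le> C" by simp
  show ?thesis
  proof (rule bounded_linear_intro[where K=C])
    fix v
    show "norm (K v) \<le> norm v * C"
    proof (cases "v = 0")
      case True then show ?thesis by (simp add: linear_0[OF K])
    next
      case False
      have "K v = norm v *\<^sub>R K (v /\<^sub>R norm v)"
        using False linear_scale[OF K, of "norm v" "v /\<^sub>R norm v"] by simp
      then have "norm (K v) = norm v * norm (K (v /\<^sub>R norm v))" by simp
      also have "\<dots> \<le> norm v * C" using False by (intro mult_left_mono C) simp_all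
      finally show ?thesis .
    qed
  qed (rule linear_add[OF K], rule linear_scale[OF K])
qed

context
  fixes T T' :: "'a::banach \<Rightarrow>\<^sub>L 'b::real_normed_vector" and L :: "'b \<Rightarrow>\<^sub>L 'a" and c e :: real
  assumes L_T: "\<And>h. L (T h) = h" and T_L: "\<And>z. T (L z) = z"
    and norm_L: "\<And>z. norm (L z) \<le> c * norm z" and c_nonneg: "0 \<le> c"
    and T'_close: "\<And>h. norm (T' h - T h) \<le> e * norm h" and small: "c * e \<le> 1/8"
begin

lemma perturbed_blinfun_bounded_below: "norm h \<le> 8/7 * c * norm (T' h)"
proof -
  have "norm (T h) \<le> norm (T' h) + e * norm h"
    using T'_close[of h] norm_triangle_ineq2[of "T h" "T' h"] by (simp add: norm_minus_commute)
  then have "c * norm (T h) \<le> c * norm (T' h) + c * e * norm h"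
    using mult_left_mono[OF _ c_nonneg] by (fastforce simp: distrib_left)
  then have "norm h \<le> c * norm (T' h) + c * e * norm h"
    using norm_L[of "T h"] by (simp add: L_T)
  also have "\<dots> \<le> c * norm (T' h) + 1/8 * norm h"
    using mult_right_mono[OF small norm_ge_zero] by simp
  finally show ?thesis by simp
qed

lemma perturbed_blinfun_surj: "surj (blinfun_apply T')"
proof -
  have "\<exists>h. T' h = z" for z
  proof -
    define f where "f h = L z + h - L (T' h)" for h
    have "\<exists>!h. f h = h"
    proof (rule banach_fix_type[where c="1/8"])
      show "\<forall>x y. dist (f x) (f y) \<le> 1/8 * dist x y"
      proof (intro allI)
        fix x y
        have "L (T (x - y) - T' (x - y)) = (x - y) - (L (T' x) - L (T' y))"
          by (simp add: blinfun.diff_right L_T)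
        then have "f x - f y = L (T (x - y) - T' (x - y))"
          unfolding f_def by (simp add: algebra_simps)
        then have "dist (f x) (f y) = norm (L (T (x - y) - T' (x - y)))" by (simp add: dist_norm)
        also have "\<dots> \<le> c * (e * norm (x - y))"
          using norm_L T'_close[of "x - y"] mult_left_mono[OF _ c_nonneg]
          by (metis norm_minus_commute order_trans)
        also have "\<dots> \<le> 1/8 * dist x y"
          using mult_right_mono[OF small norm_ge_zero, of "x - y"] by (simp add: dist_norm)
        finally show "dist (f x) (f y) \<le> 1/8 * dist x y" .
      qed
    qed auto
    then obtain h where "f h = h" by blast
    then have "L (T' h) = L z" unfolding f_def by (simp add: algebra_simps)
    then have "T (L (T' h)) = T (L z)" by simp
    then show ?thesis using T_L by auto
  qed
  then show ?thesis by (metis surjI)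
qed

end

lemma linear_inverse_if_bounded_below_surj:
  fixes T :: "'a::real_normed_vector \<Rightarrow> 'b::real_normed_vector"
  assumes T: "linear T" and m: "0 \<le> m" and below: "\<And>h. norm h \<le> m * norm (T h)"
    and "surj T"
  obtains L where "bounded_linear L" "\<And>h. L (T h) = h" "\<And>z. T (L z) = z"
    "\<And>z. norm (L z) \<le> m * norm z"
proof
  have "inj T"
  proof (rule injI)
    fix a b assume "T a = T b"
    then show "a = b" using below[of "a - b"] by (simp add: linear_diff[OF T])
  qed
  show T_L: "T (inv T z) = z" for z using \<open>surj T\<close> by (simp add: surj_f_inv_f)
  show L_T: "inv T (T h) = h" for h using \<open>inj T\<close> by simp
  show norm_L: "norm (inv T z) \<le> m * norm z" for z using below[of "inv T z"] T_L by simp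
  show "bounded_linear (inv T)"
  proof (rule bounded_linear_intro[where K=m])
    show "inv T (x + y) = inv T x + inv T y" for x y
      using L_T T_L linear_add[OF T, of "inv T x" "inv T y"] by metis
    show "inv T (r *\<^sub>R x) = r *\<^sub>R inv T x" for r x
      using L_T T_L linear_scale[OF T, of r "inv T x"] by metis
    show "norm (inv T x) \<le> norm x * m" for x using norm_L[of x] by (simp add: mult.commute)
  qed
qed

text \<open>A quantitative implicit function theorem: if the derivative at an approximate zero \<open>d\<close>
  is invertible with inverse bounded by \<open>m\<close> and varies by at most \<open>1/(2m)\<close> near \<open>d\<close>, then the
  simplified Newton map \<open>y \<mapsto> y - A(d)\<^sup>-\<^sup>1 F(y)\<close> is a \<open>1/2\<close>-contraction of \<open>cball d r\<close>, and its
  fixed point is the unique zero.\<close>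

lemma dist_unique_zero_le:
  fixes F :: "'a::banach \<Rightarrow> 'b::real_normed_vector" and m r :: real
  assumes F': "\<And>y. (F has_derivative blinfun_apply (A y)) (at y)"
    and unique: "\<And>y. F y = 0 \<Longrightarrow> y = s"
    and m: "m > 0" and r: "r > 0"
    and below: "\<And>h. norm h \<le> m * norm (A d h)" and "surj (blinfun_apply (A d))"
    and close: "\<And>y h. y \<in> ball d (2*r) \<Longrightarrow> norm (A y h - A d h) \<le> norm h / (2*m)"
    and residual: "norm (F d) < r / (2*m)"
  shows "dist d s \<le> r"
proof -
  obtain L where L: "bounded_linear L" and L_T: "\<And>h. L (A d h) = h" and T_L: "\<And>z. A d (L z) = z"
    and norm_L: "\<And>z. norm (L z) \<le> m * norm z"
    using linear_inverse_if_bounded_below_surj[OF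
        bounded_linear.linear[OF blinfun.bounded_linear_right] _ below]
      \<open>surj (blinfun_apply (A d))\<close> m by (metis less_eq_real_def)
  define g where "g y = y - L (F y)" for y
  have g': "(g has_derivative (\<lambda>h. h - L (A y h))) (at y)" for y
    unfolding g_def
    by (intro has_derivative_diff has_derivative_ident bounded_linear.has_derivative[OF L] F')
  have onorm_le: "onorm (\<lambda>h. h - L (A y h)) \<le> 1/2" if "y \<in> ball d (2*r)" for y
  proof (rule onorm_bound)
    fix h
    have "h - L (A y h) = L (A d h - A y h)"
      using L L_T by (simp add: linear_diff bounded_linear.linear)
    also have "norm \<dots> \<le> m * (norm h / (2*m))"
      using norm_L close[OF that, of h] m by (metis mult_left_mono norm_minus_commute order_trans less_imp_le)
    finally show "norm (h - L (A y h)) \<le> 1/2 * norm h" using m by simp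
  qed simp
  have contraction: "norm (g x - g y) \<le> 1/2 * norm (x - y)"
    if "x \<in> cball d r" "y \<in> cball d r" for x y
  proof (rule differentiable_bound[OF convex_cball _ _ that])
    show "(g has_derivative (\<lambda>h. h - L (A z h))) (at z within cball d r)" for z
      by (rule has_derivative_at_withinI[OF g'])
    show "onorm (\<lambda>h. h - L (A z h)) \<le> 1/2" if "z \<in> cball d r" for z
      using that r by (intro onorm_le) (simp add: dist_commute)
  qed
  have "norm (g d - d) \<le> m * norm (F d)" using norm_L by (simp add: g_def)
  also have "\<dots> < r/2" using mult_strict_left_mono[OF residual m] m by simp
  finally have g_d: "norm (g d - d) < r/2" .
  have "g ` cball d r \<subseteq> cball d r"
  proof clarify
    fix y assume y: "y \<in> cball d r"
    have "norm (g y - g d) \<le> 1/2 * norm (y - d)" using contraction[OF y, of d] r by simp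
    also have "\<dots> \<le> r/2" using y by (simp add: dist_norm norm_minus_commute)
    finally have "norm (g y - g d) \<le> r/2" .
    then have "norm (g y - d) \<le> r" using g_d norm_triangle_ineq[of "g y - g d" "g d - d"] by simp
    then show "g y \<in> cball d r" by (simp add: dist_norm norm_minus_commute)
  qed
  then have "\<exists>!x\<in>cball d r. g x = x"
    using r contraction by (intro Banach_fix[where c="1/2"]) (auto simp: complete_eq_closed dist_norm)
  then obtain x where x: "x \<in> cball d r" "g x = x" by blast
  then have "A d (L (F x)) = 0" unfolding g_def by simp
  then have "x = s" using T_L unique by simp
  then show ?thesis using x by simp
qed

lemma blinfun_surj_if_bounded_below_dense_range:
  fixes T :: "'a::banach \<Rightarrow>\<^sub>L 'b::real_normed_vector"
  assumes m: "m > 0" and below: "\<And>h. norm h \<le> m * norm (T h)"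
    and dense: "closure (range T) = UNIV"
  shows "surj (blinfun_apply T)"
proof -
  have "Topological_Spaces.complete (range T)"
    using m below
    by (intro complete_isometric_image[where e="1/m"])
      (auto simp: complete_UNIV field_simps mult.commute blinfun.bounded_linear_right)
  then have "closed (range T)" by (rule complete_imp_closed)
  then show ?thesis using dense closure_closed by metis
qed

lemma dense_range_compose_surj:
  fixes T :: "'a::real_normed_vector \<Rightarrow>\<^sub>L 'b::real_normed_vector"
  assumes "surj (blinfun_apply T)" and "closure (range d) = UNIV"
  shows "closure (range (\<lambda>j. T (d j))) = UNIV"
proof -
  have "T ` closure (range d) \<subseteq> closure (range (\<lambda>j. T (d j)))"
    by (intro image_closure_subset continuous_intros) (auto intro: closure_subset[THEN subsetD])
  then show ?thesis using assms by auto
qed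

locale measurable_implicit_zero =
  fixes F :: "'x \<Rightarrow> 'y::{banach,second_countable_topology} \<Rightarrow> 'z::{banach,second_countable_topology}"
    and A :: "'x \<Rightarrow> 'y \<Rightarrow> ('y \<Rightarrow>\<^sub>L 'z)"
    and s :: "'x \<Rightarrow> 'y"
    and M :: "'x measure"
    and dY :: "nat \<Rightarrow> 'y" and dZ :: "nat \<Rightarrow> 'z"
  assumes F_deriv: "\<And>\<xi> y. (F \<xi> has_derivative blinfun_apply (A \<xi> y)) (at y)"
    and A_cont: "\<And>\<xi>. continuous_on UNIV (A \<xi>)"
    and F_meas: "\<And>y. (\<lambda>\<xi>. F \<xi> y) \<in> borel_measurable M"
    and s_zero: "\<And>\<xi>. F \<xi> (s \<xi>) = 0"
    and s_unique: "\<And>\<xi> y. F \<xi> y = 0 \<Longrightarrow> y = s \<xi>"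
    and A_inv: "\<And>\<xi>. \<exists>L::'z \<Rightarrow>\<^sub>L 'y. (\<forall>y. L (A \<xi> (s \<xi>) y) = y) \<and> (\<forall>z. A \<xi> (s \<xi>) (L z) = z)"
    and dY_dense: "closure (range dY) = UNIV"
    and dZ_dense: "closure (range dZ) = UNIV"
begin

text \<open>The hypotheses of \<open>dist_unique_zero_le\<close>, tested only on the dense
  sequences, so that they become measurable conditions on \<open>\<xi>\<close>.\<close>

definition zero_certificate :: "'x \<Rightarrow> 'y \<Rightarrow> real \<Rightarrow> real \<Rightarrow> bool" where
  "zero_certificate \<xi> d r m \<longleftrightarrow>
    (\<forall>j. norm (dY j) \<le> m * norm (A \<xi> d (dY j))) \<and>
    (\<forall>l q. \<exists>j. norm (A \<xi> d (dY j) - dZ l) < inverse (real (Suc q))) \<and>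
    (\<forall>i j. dist (dY i) d < 2*r \<longrightarrow>
      norm (A \<xi> (dY i) (dY j) - A \<xi> d (dY j)) \<le> norm (dY j) / (2*m)) \<and>
    norm (F \<xi> d) < r / (2*m)"

lemma mem_closed_if_dY_mem: "closed S \<Longrightarrow> (\<And>i. dY i \<in> S) \<Longrightarrow> x \<in> S"
  using closure_minimal[of "range dY" S] dY_dense by auto

lemma zero_certificate_imp_dist_le:
  assumes m: "m > 0" and r: "r > 0" and cert: "zero_certificate \<xi> d r m"
  shows "dist d (s \<xi>) \<le> r"
proof (rule dist_unique_zero_le[OF F_deriv s_unique m r])
  have A_apply_cont: "continuous_on UNIV (\<lambda>y. A \<xi> y h)" for h
    using A_cont[of \<xi>] by (intro continuous_intros) auto
  have A_cont': "continuous_on UNIV (blinfun_apply (A \<xi> y))" for y by (intro continuous_intros)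
  show below: "norm h \<le> m * norm (A \<xi> d h)" for h
  proof -
    have "closed {h. norm h \<le> m * norm (A \<xi> d h)}"
      by (intro closed_Collect_le continuous_intros A_cont')
    then have "h \<in> {h. norm h \<le> m * norm (A \<xi> d h)}"
      by (rule mem_closed_if_dY_mem) (use cert in \<open>simp add: zero_certificate_def\<close>)
    then show ?thesis by simp
  qed
  show "norm (A \<xi> y h - A \<xi> d h) \<le> norm h / (2*m)" if y: "y \<in> ball d (2*r)" for y h
  proof -
    have "y \<in> {y. norm (A \<xi> y (dY j) - A \<xi> d (dY j)) \<le> norm (dY j) / (2*m)}" (is "_ \<in> ?S j") for j
    proof -
      have "ball d (2*r) \<inter> range dY \<subseteq> ?S j"
        using cert by (auto simp: zero_certificate_def dist_commute)
      moreover have "closed (?S j)" by (intro closed_Collect_le continuous_intros A_apply_cont)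
      ultimately have "closure (ball d (2*r) \<inter> range dY) \<subseteq> ?S j" by (rule closure_minimal)
      moreover have "closure (ball d (2*r) \<inter> range dY) = closure (ball d (2*r))"
        by (rule closure_open_Int_superset) (auto simp: dY_dense)
      ultimately show ?thesis using y closure_subset by blast
    qed
    moreover have "closed {h. norm (A \<xi> y h - A \<xi> d h) \<le> norm h / (2*m)}"
      by (intro closed_Collect_le continuous_intros A_cont') (use m in auto)
    ultimately have "h \<in> {h. norm (A \<xi> y h - A \<xi> d h) \<le> norm h / (2*m)}"
      using mem_closed_if_dY_mem by blast
    then show ?thesis by simp
  qed
  show "norm (F \<xi> d) < r / (2*m)" using cert by (simp add: zero_certificate_def)
  have "dZ l \<in> closure (range (A \<xi> d))" for l
    unfolding closure_approachable
  proof (intro allI impI)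
    fix e :: real assume "e > 0"
    then obtain q where q: "inverse (real (Suc q)) < e" using reals_Archimedean by blast
    obtain j where "norm (A \<xi> d (dY j) - dZ l) < inverse (real (Suc q))"
      using cert unfolding zero_certificate_def by blast
    then show "\<exists>y\<in>range (A \<xi> d). dist y (dZ l) < e" using q
      by (intro bexI[of _ "A \<xi> d (dY j)"]) (auto simp: dist_norm)
  qed
  then have "closure (range dZ) \<subseteq> closure (range (A \<xi> d))"
    by (intro closure_minimal) auto
  then have "closure (range (A \<xi> d)) = UNIV" using dZ_dense by auto
  with m below show "surj (blinfun_apply (A \<xi> d))"
    by (rule blinfun_surj_if_bounded_below_dense_range)
qed

text \<open>Certificates with arbitrarily small radius exist: near \<open>s \<xi>\<close> the derivative is a small
  perturbation of the invertible \<open>A \<xi> (s \<xi>)\<close>, and \<open>F \<xi>\<close> is small.\<close>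

lemma zero_certificate_exists:
  "\<exists>i mm k. n \<le> k \<and> zero_certificate \<xi> (dY i) (inverse (real (Suc k))) (real (Suc mm))"
proof -
  define T where "T = A \<xi> (s \<xi>)"
  obtain L :: "'z \<Rightarrow>\<^sub>L 'y" where L_T: "\<And>y. L (T y) = y" and T_L: "\<And>z. T (L z) = z"
    using A_inv[of \<xi>] unfolding T_def by blast
  define c where "c = norm L"
  have norm_L: "norm (L z) \<le> c * norm z" for z unfolding c_def by (rule norm_blinfun)
  have c: "0 \<le> c" unfolding c_def by simp
  obtain mm where "2 * c < real mm" using reals_Archimedean2 by blast
  define m where "m = real (Suc mm)"
  have m: "2 * c \<le> m" "m > 0" using \<open>2 * c < real mm\<close> unfolding m_def by auto
  define e where "e = 1 / (4*m)"
  have e: "e > 0" "c * e \<le> 1/8" using m unfolding e_def by (auto simp: field_simps)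
  obtain \<delta> where \<delta>: "\<delta> > 0" "\<And>y. dist y (s \<xi>) < \<delta> \<Longrightarrow> dist (A \<xi> y) T < e"
    using A_cont[of \<xi>] e(1) unfolding continuous_on_iff T_def by blast
  have A_close: "norm (A \<xi> y h - T h) \<le> e * norm h" if "dist y (s \<xi>) < \<delta>" for y h
  proof -
    have "norm (A \<xi> y h - T h) \<le> norm (A \<xi> y - T) * norm h"
      by (metis blinfun.diff_left norm_blinfun)
    also have "\<dots> \<le> e * norm h" using \<delta>(2)[OF that] by (simp add: dist_norm mult_right_mono)
    finally show ?thesis .
  qed
  obtain k0 where k0: "inverse (real (Suc k0)) < \<delta>/4"
    using reals_Archimedean[of "\<delta>/4"] \<delta>(1) by auto
  define r where "r = inverse (real (Suc (k0 + n)))"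
  have "r \<le> inverse (real (Suc k0))" unfolding r_def by (intro le_imp_inverse_le) auto
  then have r: "r > 0" "r < \<delta>/4" using k0 by (simp add: r_def, linarith)
  have "isCont (F \<xi>) (s \<xi>)" using has_derivative_continuous[OF F_deriv] .
  moreover have "r / (2*m) > 0" using r m by simp
  ultimately obtain \<delta>' where \<delta>': "\<delta>' > 0" "\<And>y. dist y (s \<xi>) < \<delta>' \<Longrightarrow> norm (F \<xi> y) < r / (2*m)"
    using s_zero[of \<xi>] unfolding continuous_at_eps_delta by (auto simp: dist_norm)
  have "s \<xi> \<in> closure (range dY)" using dY_dense by simp
  moreover have "min (\<delta>/2) \<delta>' > 0" using \<delta>(1) \<delta>'(1) by simp
  ultimately obtain i where i: "dist (dY i) (s \<xi>) < min (\<delta>/2) \<delta>'"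
    unfolding closure_approachable by blast
  define d where "d = dY i"
  have d_close: "dist d (s \<xi>) < \<delta>" using i \<delta>(1) unfolding d_def by simp
  have below: "norm h \<le> m * norm (A \<xi> d h)" for h
  proof -
    have "norm h \<le> 8/7 * c * norm (A \<xi> d h)"
      using perturbed_blinfun_bounded_below[OF L_T T_L norm_L c A_close[OF d_close] e(2)] by simp
    also have "\<dots> \<le> m * norm (A \<xi> d h)" using m by (intro mult_right_mono) auto
    finally show ?thesis .
  qed
  have "surj (blinfun_apply (A \<xi> d))"
    using perturbed_blinfun_surj[OF L_T T_L norm_L c A_close[OF d_close] e(2)] by simp
  then have dense: "closure (range (\<lambda>j. A \<xi> d (dY j))) = UNIV"
    using dY_dense by (rule dense_range_compose_surj)
  have "\<exists>j. norm (A \<xi> d (dY j) - dZ l) < inverse (real (Suc q))" for l q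
  proof -
    have "dZ l \<in> closure (range (\<lambda>j. A \<xi> d (dY j)))" using dense by simp
    moreover have "inverse (real (Suc q)) > 0" by simp
    ultimately obtain j where "dist (A \<xi> d (dY j)) (dZ l) < inverse (real (Suc q))"
      unfolding closure_approachable by blast
    then show ?thesis by (auto simp: dist_norm)
  qed
  moreover have "norm (A \<xi> (dY j) h - A \<xi> d h) \<le> norm h / (2*m)"
    if "dist (dY j) d < 2*r" for j h
  proof -
    have "dist (dY j) (s \<xi>) < \<delta>"
      using dist_triangle[of "dY j" "s \<xi>" d] that r i unfolding d_def by simp
    then have "norm (A \<xi> (dY j) h - A \<xi> d h) \<le> e * norm h + e * norm h"
      using A_close[of "dY j" h] A_close[OF d_close, of h]
        norm_triangle_ineq4[of "A \<xi> (dY j) h - T h" "A \<xi> d h - T h"]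
      by simp
    also have "\<dots> = norm h / (2*m)" unfolding e_def using m by (simp add: field_simps)
    finally show ?thesis .
  qed
  moreover have "norm (F \<xi> d) < r / (2*m)" using \<delta>'(2) i unfolding d_def by simp
  ultimately have "zero_certificate \<xi> (dY i) r m"
    using below unfolding zero_certificate_def d_def by blast
  then show ?thesis unfolding r_def m_def by (intro exI[of _ i] exI[of _ mm] exI[of _ "k0+n"]) simp
qed

lemma borel_measurable_A_apply[measurable]: "(\<lambda>\<xi>. A \<xi> y h) \<in> borel_measurable M"
  by (rule borel_measurable_has_derivative_apply[OF F_deriv F_meas])

lemma borel_measurable_F[measurable]: "(\<lambda>\<xi>. F \<xi> y) \<in> borel_measurable M"
  by (rule F_meas)

lemma pred_zero_certificate[measurable]: "Measurable.pred M (\<lambda>\<xi>. zero_certificate \<xi> d r m)"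
  unfolding zero_certificate_def by measurable

definition certified :: "nat \<Rightarrow> nat \<Rightarrow> 'x \<Rightarrow> bool" where
  "certified n j \<xi> \<longleftrightarrow> (case from_nat j :: nat \<times> nat \<times> nat of (i, mm, k) \<Rightarrow>
       n \<le> k \<and> zero_certificate \<xi> (dY i) (inverse (real (Suc k))) (real (Suc mm)))"

lemma pred_certified[measurable]: "Measurable.pred M (certified n j)"
  unfolding certified_def by (cases "from_nat j :: nat \<times> nat \<times> nat") simp

definition approx_zero :: "nat \<Rightarrow> 'x \<Rightarrow> 'y" where
  "approx_zero n \<xi> = dY (fst (from_nat (LEAST j. certified n j \<xi>) :: nat \<times> nat \<times> nat))"

lemma dist_approx_zero_le: "dist (approx_zero n \<xi>) (s \<xi>) \<le> inverse (real (Suc n))"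
proof -
  obtain i mm k where "n \<le> k" "zero_certificate \<xi> (dY i) (inverse (real (Suc k))) (real (Suc mm))"
    using zero_certificate_exists by blast
  then have "certified n (to_nat (i, mm, k)) \<xi>" unfolding certified_def by simp
  then have "certified n (LEAST j. certified n j \<xi>) \<xi>" by (rule LeastI)
  then obtain i' mm' k' where
    least: "(from_nat (LEAST j. certified n j \<xi>) :: nat \<times> nat \<times> nat) = (i', mm', k')"
    and "n \<le> k'" and cert: "zero_certificate \<xi> (dY i') (inverse (real (Suc k'))) (real (Suc mm'))"
    unfolding certified_def by (auto split: prod.splits)
  have "dist (dY i') (s \<xi>) \<le> inverse (real (Suc k'))"
    by (rule zero_certificate_imp_dist_le[OF _ _ cert]) auto
  also have "\<dots> \<le> inverse (real (Suc n))" using \<open>n \<le> k'\<close> by (intro le_imp_inverse_le) auto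
  finally show ?thesis unfolding approx_zero_def least by simp
qed

lemma LIMSEQ_approx_zero: "(\<lambda>n. approx_zero n \<xi>) \<longlonglongrightarrow> s \<xi>"
proof -
  have "(\<lambda>n. dist (approx_zero n \<xi>) (s \<xi>)) \<longlonglongrightarrow> 0"
    using dist_approx_zero_le
    by (intro tendsto_sandwich[OF _ _ tendsto_const LIMSEQ_inverse_real_of_nat]) auto
  then show ?thesis using tendsto_dist_iff by blast
qed

theorem borel_measurable_compose_zero:
  fixes J :: "'y \<Rightarrow> 'x \<Rightarrow> 'b::{metric_space,second_countable_topology}"
  assumes J_cont: "\<And>\<xi>. continuous_on UNIV (\<lambda>y. J y \<xi>)"
    and J_meas: "\<And>y. (\<lambda>\<xi>. J y \<xi>) \<in> borel_measurable M"
  shows "(\<lambda>\<xi>. J (s \<xi>) \<xi>) \<in> borel_measurable M"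
proof (rule borel_measurable_LIMSEQ_metric)
  fix n
  show "(\<lambda>\<xi>. J (approx_zero n \<xi>) \<xi>) \<in> borel_measurable M"
    unfolding approx_zero_def
    by (rule measurable_compose_countable'[where I=UNIV
          and f="\<lambda>j \<xi>. J (dY (fst (from_nat j :: nat \<times> nat \<times> nat))) \<xi>"])
      (auto intro: J_meas)
next
  fix \<xi>
  show "(\<lambda>n. J (approx_zero n \<xi>) \<xi>) \<longlonglongrightarrow> J (s \<xi>) \<xi>"
    using J_cont[of \<xi>] LIMSEQ_approx_zero[of \<xi>]
    by (auto simp: continuous_on_eq_continuous_at intro: isCont_tendsto_compose)
qed

end

lemma borel_measurable_compose_implicit_solution:
  fixes J :: "'y::{banach,second_countable_topology} \<Rightarrow> 'x \<Rightarrow> 'b::{metric_space,second_countable_topology}"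
    and E :: "'y \<Rightarrow> 'u::real_normed_vector \<Rightarrow> 'x \<Rightarrow> 'z::{banach,second_countable_topology}"
    and DE :: "'x \<Rightarrow> 'y \<times> 'u \<Rightarrow> (('y \<times> 'u) \<Rightarrow>\<^sub>L 'z)"
  assumes J_cont: "\<And>\<xi>. continuous_on UNIV (\<lambda>y. J y \<xi>)"
    and J_meas: "\<And>y. (\<lambda>\<xi>. J y \<xi>) \<in> borel_measurable P"
    and E_meas: "\<And>y. (\<lambda>\<xi>. E y u \<xi>) \<in> borel_measurable P"
    and E_deriv: "\<And>\<xi> p. ((\<lambda>(y, u). E y u \<xi>) has_derivative blinfun_apply (DE \<xi> p)) (at p)"
    and DE_cont: "\<And>\<xi>. continuous_on UNIV (DE \<xi>)"
    and S_zero: "\<And>\<xi>. E (S \<xi>) u \<xi> = 0"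
    and S_unique: "\<And>\<xi> y. E y u \<xi> = 0 \<Longrightarrow> y = S \<xi>"
    and Ey_inv: "\<And>\<xi>. \<exists>L :: 'z \<Rightarrow>\<^sub>L 'y. (\<forall>y. L (DE \<xi> (S \<xi>, u) (y, 0)) = y) \<and>
        (\<forall>z. DE \<xi> (S \<xi>, u) (L z, 0) = z)"
  shows "(\<lambda>\<xi>. J (S \<xi>) \<xi>) \<in> borel_measurable P"
proof -
  obtain dY :: "nat \<Rightarrow> 'y" where dY: "closure (range dY) = UNIV" using dense_sequence_exists by blast
  obtain dZ :: "nat \<Rightarrow> 'z" where dZ: "closure (range dZ) = UNIV" using dense_sequence_exists by blast
  define I :: "'y \<Rightarrow>\<^sub>L ('y \<times> 'u)" where "I = Blinfun (\<lambda>h. (h, 0))"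
  have I: "I h = (h, 0)" for h
    unfolding I_def
    by (simp add: bounded_linear_Blinfun_apply bounded_linear_Pair bounded_linear_ident
        bounded_linear_zero)
  interpret measurable_implicit_zero "\<lambda>\<xi> y. E y u \<xi>" "\<lambda>\<xi> y. DE \<xi> (y, u) o\<^sub>L I" S P dY dZ
  proof
    fix \<xi> and y :: 'y
    have "((\<lambda>y. (y, u)) has_derivative (\<lambda>h. (h, 0))) (at y)"
      by (intro derivative_eq_intros) auto
    from has_derivative_compose[OF this E_deriv[of \<xi> "(y, u)"]]
    have "((\<lambda>y. E y u \<xi>) has_derivative (\<lambda>h. DE \<xi> (y, u) (h, 0))) (at y)" by simp
    moreover have "blinfun_apply (DE \<xi> (y, u) o\<^sub>L I) = (\<lambda>h. DE \<xi> (y, u) (h, 0))"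
      by (simp add: I fun_eq_iff)
    ultimately show "((\<lambda>y. E y u \<xi>) has_derivative blinfun_apply (DE \<xi> (y, u) o\<^sub>L I)) (at y)"
      by simp
  next
    fix \<xi>
    have "continuous_on UNIV (\<lambda>y. DE \<xi> (y, u))"
      by (rule continuous_on_compose2[OF DE_cont]) (auto intro: continuous_intros)
    then show "continuous_on UNIV (\<lambda>y. DE \<xi> (y, u) o\<^sub>L I)"
      by (intro continuous_intros)
  next
    fix \<xi>
    show "\<exists>L::'z \<Rightarrow>\<^sub>L 'y. (\<forall>y. L ((DE \<xi> (S \<xi>, u) o\<^sub>L I) y) = y) \<and>
        (\<forall>z. (DE \<xi> (S \<xi>, u) o\<^sub>L I) (L z) = z)"
      using Ey_inv[of \<xi>] by (simp add: I)
  qed (use E_meas S_zero S_unique dY dZ in auto)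
  show ?thesis by (rule borel_measurable_compose_zero[OF J_cont J_meas])
qed

lemma majorant_if_gradient_bounded:
  fixes f :: "'u::real_inner \<Rightarrow> 'x \<Rightarrow> real" and K :: "'v::real_normed_vector \<Rightarrow> 'u"
  assumes K: "bounded_linear K" and B: "convex B" "bounded B" and u0: "u0 \<in> B"
    and f': "\<And>u \<xi>. ((\<lambda>w. f w \<xi>) has_derivative (\<lambda>h. inner (K (M u \<xi>)) h)) (at u)"
    and M_le: "\<And>u \<xi>. u \<in> B \<Longrightarrow> norm (M u \<xi>) \<le> \<zeta> \<xi>"
  obtains c where "0 \<le> c" "\<And>u \<xi>. u \<in> B \<Longrightarrow> f u \<xi> \<le> f u0 \<xi> + c * \<zeta> \<xi>"
proof -
  obtain C where C: "C > 0" "\<And>v. norm (K v) \<le> norm v * C"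
    using bounded_linear.pos_bounded[OF K] by blast
  obtain R where R: "R > 0" "\<And>x. x \<in> B \<Longrightarrow> norm x \<le> R"
    using B(2) unfolding bounded_pos by blast
  have "f u \<xi> \<le> f u0 \<xi> + 2 * R * C * \<zeta> \<xi>" if u: "u \<in> B" for u \<xi>
  proof -
    have \<zeta>: "0 \<le> \<zeta> \<xi>" using M_le[OF u0] norm_ge_zero order_trans by blast
    have "norm (f u \<xi> - f u0 \<xi>) \<le> C * \<zeta> \<xi> * norm (u - u0)"
    proof (rule differentiable_bound[OF B(1) has_derivative_at_withinI[OF f'] _ u u0])
      show "onorm (\<lambda>h. inner (K (M x \<xi>)) h) \<le> C * \<zeta> \<xi>" if "x \<in> B" for x
      proof -
        have "onorm (\<lambda>h. inner (K (M x \<xi>)) h) \<le> norm (K (M x \<xi>)) * onorm (\<lambda>h::'u. h)"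
          using onorm_inner_right[OF bounded_linear_ident, of "K (M x \<xi>)"] by simp
        also have "\<dots> \<le> norm (K (M x \<xi>))" using onorm_id_le by (intro mult_left_le) auto
        also have "\<dots> \<le> norm (M x \<xi>) * C" by (rule C(2))
        also have "\<dots> \<le> C * \<zeta> \<xi>" using M_le[OF that] C by (simp add: mult.commute)
        finally show ?thesis .
      qed
    qed
    also have "\<dots> \<le> C * \<zeta> \<xi> * (2 * R)"
      using norm_triangle_ineq4[of u u0] R(2)[OF u] R(2)[OF u0] C(1) \<zeta>
      by (intro mult_left_mono) auto
    finally show ?thesis by (simp add: abs_le_iff algebra_simps)
  qed
  moreover have "0 \<le> 2 * R * C" using R C by simp
  ultimately show ?thesis using that by blast
qed

theorem mainTheorem5:
  fixes J1 :: "'y::{banach,second_countable_topology} \<Rightarrow> 'x::polish_space \<Rightarrow> real"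
    and DJ1 :: "'x \<Rightarrow> 'y \<Rightarrow> ('y \<Rightarrow>\<^sub>L real)"
    and \<alpha> :: real
    and \<psi> :: "'u::{real_inner,complete_space,second_countable_topology} \<Rightarrow> ennreal"
    and E :: "'y \<Rightarrow> 'u \<Rightarrow> 'x \<Rightarrow> 'z::{banach,second_countable_topology}"
    and DE :: "'x \<Rightarrow> 'y \<times> 'u \<Rightarrow> (('y \<times> 'u) \<Rightarrow>\<^sub>L 'z)"
    and S :: "'u \<Rightarrow> 'x \<Rightarrow> 'y"
    and P :: "'x measure"
    and u0 :: 'u and \<rho> :: real
    and Vad W :: "'u set"
    and K :: "'v::{banach,second_countable_topology} \<Rightarrow> 'u"
    and B :: "'u set"
    and M :: "'u \<Rightarrow> 'x \<Rightarrow> 'v"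
    and \<zeta> :: "'x \<Rightarrow> real"
  assumes P_prob: "prob_space P" and P_sets: "sets P = sets borel"
    \<comment> \<open>(A1)\<close>
    and J1_nonneg: "\<forall>y \<xi>. 0 \<le> J1 y \<xi>"
    and J1_cont: "\<forall>\<xi>. continuous_on UNIV (\<lambda>y. J1 y \<xi>)"
    and J1_meas: "\<forall>y. (\<lambda>\<xi>. J1 y \<xi>) \<in> borel_measurable P"
    and J1_deriv: "\<forall>\<xi> y. ((\<lambda>y. J1 y \<xi>) has_derivative blinfun_apply (DJ1 \<xi> y)) (at y)"
    and J1_deriv_cont: "\<forall>\<xi>. continuous_on UNIV (DJ1 \<xi>)"
    and alpha_pos: "\<alpha> > 0"
    and psi_proper: "proper_enn \<psi>" and psi_convex: "convex_enn \<psi>" and psi_lsc: "lsc_enn \<psi>"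
    \<comment> \<open>(A2)\<close>
    and E_cont: "\<forall>\<xi>. continuous_on UNIV (\<lambda>(y, u). E y u \<xi>)"
    and E_meas: "\<forall>y u. (\<lambda>\<xi>. E y u \<xi>) \<in> borel_measurable P"
    and E_deriv: "\<forall>\<xi> p. ((\<lambda>(y, u). E y u \<xi>) has_derivative blinfun_apply (DE \<xi> p)) (at p)"
    and E_deriv_cont: "\<forall>\<xi>. continuous_on UNIV (DE \<xi>)"
    and S_sol: "\<forall>u \<xi>. E (S u \<xi>) u \<xi> = 0 \<and> (\<forall>y. E y u \<xi> = 0 \<longrightarrow> y = S u \<xi>)"
    and Ey_inv: "\<forall>u \<xi>. \<exists>L :: 'z \<Rightarrow>\<^sub>L 'y.
        (\<forall>y. blinfun_apply L (blinfun_apply (DE \<xi> (S u \<xi>, u)) (y, 0)) = y) \<and>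
        (\<forall>z. blinfun_apply (DE \<xi> (S u \<xi>, u)) (blinfun_apply L z, 0) = z)"
    \<comment> \<open>u0, \<rho>, V_ad^\<rho>(u0)\<close>
    and u0_ad: "\<psi> u0 < \<infinity>"
    and u0_fin: "(\<integral>\<^sup>+ \<xi>. ennreal (J1 (S u0 \<xi>) \<xi>) + \<psi> u0 + ennreal (\<alpha> / 2 * (norm u0)\<^sup>2) \<partial>P) < \<infinity>"
    and rho_pos: "\<rho> > 0"
    and Vad_def: "Vad = {u. \<psi> u < \<infinity> \<and>
        ennreal (\<alpha> / 2 * (norm u)\<^sup>2)
          \<le> (\<integral>\<^sup>+ \<xi>. ennreal (J1 (S u0 \<xi>) \<xi>) + \<psi> u0 + ennreal (\<alpha> / 2 * (norm u0)\<^sup>2) \<partial>P) + ennreal \<rho>}"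
    \<comment> \<open>(A4)\<close>
    and K_compact: "compact_operator K"
    and B_bounded: "bounded B" and B_convex: "convex B" and B_open: "open B"
    and Vad_B: "Vad \<subseteq> B"
    and M_cont: "\<forall>\<xi>. continuous_on UNIV (\<lambda>u. M u \<xi>)"
    and M_meas: "\<forall>u. (\<lambda>\<xi>. M u \<xi>) \<in> borel_measurable P"
    and grad: "\<forall>u \<xi>. ((\<lambda>w. J1 (S w \<xi>) \<xi>) has_derivative (\<lambda>h. inner (K (M u \<xi>)) h)) (at u)"
    and zeta_int: "integrable P \<zeta>" and zeta_nonneg: "\<forall>\<xi>. 0 \<le> \<zeta> \<xi>"
    and M_bound: "\<forall>u\<in>B. \<forall>\<xi>. norm (M u \<xi>) \<le> \<zeta> \<xi>"
    and W_def: "W = Vad \<inter> closure {prox_enn (\<lambda>w. \<psi> w / ennreal \<alpha>) (- (1 / \<alpha>) *\<^sub>R K v) | v.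
                                   norm v \<le> (\<integral>\<xi>. \<zeta> \<xi> \<partial>P) + \<rho>}"
  shows "(\<forall>\<xi>. continuous_on W (\<lambda>u. J1 (S u \<xi>) \<xi>)) \<and>
         (\<forall>u\<in>W. (\<lambda>\<xi>. J1 (S u \<xi>) \<xi>) \<in> borel_measurable P) \<and>
         (\<exists>h. integrable P h \<and> (\<forall>\<xi>. 0 \<le> h \<xi>) \<and> (\<forall>u\<in>W. \<forall>\<xi>. J1 (S u \<xi>) \<xi> \<le> h \<xi>))"
proof -
  have meas: "(\<lambda>\<xi>. J1 (S u \<xi>) \<xi>) \<in> borel_measurable P" for u
    by (rule borel_measurable_compose_implicit_solution[where E=E and DE=DE and u=u])
      (use J1_cont J1_meas E_meas E_deriv E_deriv_cont S_sol Ey_inv in blast)+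
  have cont: "continuous_on W (\<lambda>u. J1 (S u \<xi>) \<xi>)" for \<xi>
    by (intro continuous_at_imp_continuous_on ballI has_derivative_continuous[OF grad[rule_format]])
  define I where "I = (\<integral>\<^sup>+ \<xi>. ennreal (J1 (S u0 \<xi>) \<xi>) + \<psi> u0 + ennreal (\<alpha> / 2 * (norm u0)\<^sup>2) \<partial>P)"
  have "ennreal (\<alpha> / 2 * (norm u0)\<^sup>2) = (\<integral>\<^sup>+ \<xi>. ennreal (\<alpha> / 2 * (norm u0)\<^sup>2) \<partial>P)"
    using prob_space.emeasure_space_1[OF P_prob] by simp
  also have "\<dots> \<le> I" unfolding I_def by (intro nn_integral_mono add_increasing) auto
  also have "\<dots> \<le> I + ennreal \<rho>" by simp
  finally have "u0 \<in> B" using u0_ad Vad_B unfolding Vad_def I_def by blast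
  then obtain c where c: "0 \<le> c" "\<And>u \<xi>. u \<in> B \<Longrightarrow> J1 (S u \<xi>) \<xi> \<le> J1 (S u0 \<xi>) \<xi> + c * \<zeta> \<xi>"
    using majorant_if_gradient_bounded[where f="\<lambda>u \<xi>. J1 (S u \<xi>) \<xi>",
          OF bounded_linear_if_compact_operator[OF K_compact] B_convex B_bounded _ grad[rule_format]
          M_bound[rule_format]]
    by auto
  have "(\<integral>\<^sup>+ \<xi>. ennreal (J1 (S u0 \<xi>) \<xi>) \<partial>P) \<le> I"
    unfolding I_def by (intro nn_integral_mono) (simp add: add.assoc add_increasing2)
  then have "integrable P (\<lambda>\<xi>. J1 (S u0 \<xi>) \<xi>)"
    using meas J1_nonneg u0_fin unfolding I_def by (intro integrableI_nonneg) auto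
  then have "integrable P (\<lambda>\<xi>. J1 (S u0 \<xi>) \<xi> + c * \<zeta> \<xi>)" using zeta_int by auto
  moreover have "0 \<le> J1 (S u0 \<xi>) \<xi> + c * \<zeta> \<xi>" for \<xi> using J1_nonneg zeta_nonneg c(1) by simp
  moreover have "W \<subseteq> B" using Vad_B W_def by blast
  ultimately show ?thesis using cont meas c(2) by blast
qed

end
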